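(* Let $\theta : A(\mathbb{D})\to M_2(\mathbb{C})$ be a unital bounded homomorphism and let $\alpha : A(\mathbb{D})\to A(\mathbb{D})$ be a unital antilinear map. Define $$\theta_\alpha(f):=\tfrac12\bigl(\theta(f)+\theta(\alpha(f))^*\bigr)\quad(f\in A(\mathbb{D})).$$ Assume that $\|\theta_\alpha\|\le 1$ and that the spectrum of $\theta(z)$ consists of a single point of $\mathbb{D}$, where $z$ is the coordinate function. Then $\|\theta\|_{cb}\le 2$.
   Context: $A(\mathbb{D})$ is the disk algebra: the continuous functions on the closed unit disk that are holomorphic on the open unit disk $\mathbb{D}$, with the supremum norm. $M_k(A(\mathbb{D}))$ carries the norm $\|[f_{ij}]\|=\sup_{|w|\le1}\|[f_{ij}(w)]\|$. For a linear map $\phi$, set $\phi^{(k)}([f_{ij}])=[\phi(f_{ij})]$ and $\|\phi\|_{cb}=\sup_k\|\phi^{(k)}\|$. A map $\alpha$ is antilinear if $\alpha(\lambda f+g)=\overline\lambda\alpha(f)+\alpha(g)$, and it is unital if $\alpha(1)=1$. *)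

theory Defs
  imports "HOL-Analysis.Analysis"
begin

text \<open>The disk algebra A(D), with canonical representatives: continuous on the closed
  unit disk, holomorphic on the open unit disk, and zero outside the closed disk.\<close>
definition disk_algebra :: "(complex \<Rightarrow> complex) set" where
  "disk_algebra = {f. continuous_on (cball 0 1) f \<and> f holomorphic_on ball 0 1
                      \<and> (\<forall>w. 1 < cmod w \<longrightarrow> f w = 0)}"

definition da_one :: "complex \<Rightarrow> complex" where
  "da_one = (\<lambda>w. if cmod w \<le> 1 then 1 else 0)"

definition da_z :: "complex \<Rightarrow> complex" where
  "da_z = (\<lambda>w. if cmod w \<le> 1 then w else 0)"

definition da_norm :: "(complex \<Rightarrow> complex) \<Rightarrow> real" where
  "da_norm f = (SUP w\<in>cball 0 1. cmod (f w))"

definition cmat_norm :: "nat \<Rightarrow> (nat \<Rightarrow> nat \<Rightarrow> complex) \<Rightarrow> real" where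
  "cmat_norm k M = (SUP x\<in>{x::nat \<Rightarrow> complex. (\<Sum>i<k. (cmod (x i))\<^sup>2) \<le> 1}.
      sqrt (\<Sum>i<k. (cmod (\<Sum>j<k. M i j * x j))\<^sup>2))"

definition da_mat_norm :: "nat \<Rightarrow> (nat \<Rightarrow> nat \<Rightarrow> complex \<Rightarrow> complex) \<Rightarrow> real" where
  "da_mat_norm k F = (SUP w\<in>cball 0 1. cmat_norm k (\<lambda>i j. F i j w))"

definition m2_norm :: "complex^2^2 \<Rightarrow> real" where
  "m2_norm A = onorm (\<lambda>x. A *v x)"

text \<open>Operator norm on M_k(M_2(C)) = M_{2k}(C), block form acting on (C^2)^k.\<close>
definition blk_norm :: "nat \<Rightarrow> (nat \<Rightarrow> nat \<Rightarrow> complex^2^2) \<Rightarrow> real" where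
  "blk_norm k B = (SUP x\<in>{x::nat \<Rightarrow> complex^2. (\<Sum>i<k. (norm (x i))\<^sup>2) \<le> 1}.
      sqrt (\<Sum>i<k. (norm (\<Sum>j<k. B i j *v x j))\<^sup>2))"

definition cadj :: "complex^2^2 \<Rightarrow> complex^2^2" where
  "cadj A = (\<chi> i j. cnj (A $ j $ i))"

definition mat_spectrum :: "complex^2^2 \<Rightarrow> complex set" where
  "mat_spectrum A = {\<mu>. \<not> invertible (A - mat \<mu>)}"

definition cscale :: "complex \<Rightarrow> complex^2^2 \<Rightarrow> complex^2^2" where
  "cscale c A = (\<chi> i j. c * A $ i $ j)"

end

(* Since theta(z) has the single eigenvalue mu in the open disk, N = theta(z) - mu satisfies
   N^2 = 0, and writing h = h(mu) + (z - mu) Q(h) with the divided difference Q(h), twice,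
   gives theta(h) = h(mu) + h'(mu) N for every h in A(D).  Pick an orthonormal frame (v, u)
   of C^2 with N u = 0 and N v = a u.  Testing the bound on theta_alpha against the Blaschke
   factor b_mu, with b_mu(mu) = 0 and b_mu'(mu) = 1/(1 - |mu|^2), yields |a| <= 2 (1 - |mu|^2).

   For F in the unit ball of M_k(A(D)) and the disk automorphism phi with phi(0) = mu, the
   Cauchy formula for the derivative at 0 of w |-> <F(phi w) (p + w q), conj(w) s + t>
   shows that the block matrix [[F(mu), 0], [(1 - |mu|^2) F'(mu), F(mu)]] is a contraction,
   a matrix form of the Schwarz-Pick lemma.  In the frame (v, u), theta^(k)(F) is
   [[F(mu), 0], [a F'(mu), F(mu)]], and multiplying the off-diagonal block by a scalar of
   modulus at most 2 increases the norm at most by the factor 2. *)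

theory Submission
  imports Defs "HOL-Complex_Analysis.Riemann_Mapping"
begin

section \<open>Linear algebra in C^2\<close>

definition cinner :: "complex^2 \<Rightarrow> complex^2 \<Rightarrow> complex" where
  "cinner x y = x$1 * cnj (y$1) + x$2 * cnj (y$2)"

definition vperp :: "complex^2 \<Rightarrow> complex^2" where
  "vperp u = (\<chi> i. if i = 1 then - cnj (u$2) else cnj (u$1))"

lemma vperp_nth [simp]: "vperp u $ 1 = - cnj (u$2)" "vperp u $ 2 = cnj (u$1)"
  by (auto simp: vperp_def)

lemma cinner_add_left: "cinner (x + y) z = cinner x z + cinner y z"
  and cinner_add_right: "cinner x (y + z) = cinner x y + cinner x z"
  and cinner_scale_left: "cinner (c *s x) z = c * cinner x z"
  and cinner_scale_right: "cinner x (c *s z) = cnj c * cinner x z"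
  and cinner_zero_left: "cinner 0 z = 0"
  by (simp_all add: cinner_def algebra_simps)

lemma cinner_vperp: "cinner u (vperp u) = 0" "cinner (vperp u) u = 0"
  by (simp_all add: cinner_def algebra_simps)

lemma norm_vec2_power2: "(norm (x::complex^2))\<^sup>2 = (cmod (x$1))\<^sup>2 + (cmod (x$2))\<^sup>2"
  by (simp add: norm_vec_def L2_set_def sum_2)

lemma cinner_self: "cinner x x = complex_of_real ((norm x)\<^sup>2)"
  unfolding cinner_def norm_vec2_power2 of_real_add complex_norm_square ..

lemma norm_vperp [simp]: "norm (vperp u) = norm u"
  by (simp add: norm_vec_def L2_set_def sum_2 add.commute)

lemma cinner_unit: "norm u = 1 \<Longrightarrow> cinner u u = 1" "norm u = 1 \<Longrightarrow> cinner (vperp u) (vperp u) = 1"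
  by (simp_all only: cinner_self norm_vperp) simp_all

lemma frame_decomp:
  assumes "norm u = 1"
  shows "x = cinner x (vperp u) *s vperp u + cinner x u *s u"
  using cinner_unit(1)[OF assms] unfolding vec_eq_iff forall_2 cinner_def by simp algebra

lemma norm_frame_comb:
  assumes "norm u = 1"
  shows "(norm (P *s vperp u + Q *s u))\<^sup>2 = (cmod P)\<^sup>2 + (cmod Q)\<^sup>2"
proof -
  have "complex_of_real ((norm (P *s vperp u + Q *s u))\<^sup>2)
      = cinner (P *s vperp u + Q *s u) (P *s vperp u + Q *s u)"
    by (rule cinner_self[symmetric])
  also have "\<dots> = P * cnj P + Q * cnj Q"
    by (simp add: cinner_add_left cinner_add_right cinner_scale_left cinner_scale_right
        cinner_vperp cinner_unit[OF assms])
  also have "\<dots> = complex_of_real ((cmod P)\<^sup>2 + (cmod Q)\<^sup>2)"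
    by (simp only: of_real_add complex_norm_square)
  finally show ?thesis by (simp only: of_real_eq_iff)
qed

lemma norm_frame:
  assumes "norm u = 1"
  shows "(norm x)\<^sup>2 = (cmod (cinner x (vperp u)))\<^sup>2 + (cmod (cinner x u))\<^sup>2"
  using norm_frame_comb[OF assms] frame_decomp[OF assms, of x] by metis

lemma norm_cinner_le:
  assumes "norm u = 1"
  shows "cmod (cinner x u) \<le> norm x"
proof -
  have "(cmod (cinner x u))\<^sup>2 \<le> (norm x)\<^sup>2"
    using norm_frame[OF assms, of x] by simp
  then show ?thesis by (simp add: power2_le_iff_abs_le)
qed

lemma cscale_mult_vec: "cscale c A *v x = c *s (A *v x)"
  by (simp add: vec_eq_iff forall_2 matrix_vector_mult_def sum_2 algebra_simps cscale_def)

lemma matrix_mul_cscale_one: "(A::complex^2^2) ** cscale c (mat 1) = cscale c A"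
  by (simp add: vec_eq_iff forall_2 matrix_matrix_mult_def sum_2 cscale_def mat_def)

lemma cscale_one_add: "cscale (- \<mu>) (mat 1) + A = A - mat (\<mu>::complex)"
  by (simp add: vec_eq_iff forall_2 cscale_def mat_def)

lemma cinner_cadj: "cinner (cadj A *v x) y = cnj (cinner (A *v y) x)"
  by (simp add: cinner_def cadj_def matrix_vector_mult_def sum_2 algebra_simps)

lemma trace_frame:
  assumes "norm u = 1"
  shows "cinner (N *v u) u + cinner (N *v vperp u) (vperp u) = N$1$1 + N$2$2"
  using cinner_unit(1)[OF assms] by (simp add: cinner_def matrix_vector_mult_def sum_2) algebra

lemma single_eigenvalue_nilpotent:
  fixes A :: "complex^2^2"
  assumes "mat_spectrum A = {\<mu>}"
  shows "(A - mat \<mu>) ** (A - mat \<mu>) = 0" and "(A - mat \<mu>)$1$1 + (A - mat \<mu>)$2$2 = 0"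
proof -
  have "det (A - mat \<mu>) = 0" using assms by (auto simp: mat_spectrum_def invertible_det_nz)
  then have det: "(A$1$1 - \<mu>) * (A$2$2 - \<mu>) - A$1$2 * A$2$1 = 0"
    by (simp add: det_2 mat_def)
  have trace: "A$1$1 + A$2$2 - 2 * \<mu> = 0"
  proof (rule ccontr)
    let ?\<tau> = "A$1$1 + A$2$2 - 2 * \<mu>"
    assume "?\<tau> \<noteq> 0"
    then have "\<mu> + ?\<tau> \<notin> mat_spectrum A" using assms by auto
    then have "det (A - mat (\<mu> + ?\<tau>)) \<noteq> 0" by (auto simp: mat_spectrum_def invertible_det_nz)
    moreover have "det (A - mat (\<mu> + ?\<tau>)) = 0"
      \<comment> \<open>the characteristic polynomial is symmetric about half the trace\<close>
      using det by (simp add: det_2 mat_def) algebra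
    ultimately show False by simp
  qed
  show "(A - mat \<mu>) ** (A - mat \<mu>) = 0"
    using det trace by (simp add: vec_eq_iff forall_2 matrix_matrix_mult_def sum_2 mat_def) algebra
  show "(A - mat \<mu>)$1$1 + (A - mat \<mu>)$2$2 = 0"
    using trace by (simp add: mat_def)
qed

lemma nilpotent_unit_kernel:
  fixes N :: "complex^2^2"
  assumes "N ** N = 0"
  obtains u where "norm u = 1" "N *v u = 0"
proof (cases "N = 0")
  case True
  then show ?thesis using that[of "axis 1 1"] by (simp add: norm_axis_1)
next
  case False
  then obtain j where "column j N \<noteq> 0" by (auto simp: vec_eq_iff column_def)
  define c where "c = column j N"
  have "N *v c = column j (N ** N)"
    by (simp add: c_def vec_eq_iff column_def matrix_vector_mult_def matrix_matrix_mult_def)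
  then have "N *v c = 0"
    by (simp add: assms column_def vec_eq_iff)
  moreover have "sgn c = complex_of_real (inverse (norm c)) *s c"
    by (simp add: sgn_div_norm vec_eq_iff scaleR_conv_of_real[where 'a=complex]
        del: scaleR_conv_of_real)
  ultimately have "N *v sgn c = 0"
    by (simp add: vector_scalar_commute)
  moreover have "norm (sgn c) = 1"
    using \<open>column j N \<noteq> 0\<close> by (simp add: c_def norm_sgn)
  ultimately show ?thesis using that by blast
qed

lemma nilpotent_frame:
  fixes N :: "complex^2^2"
  assumes "N ** N = 0" and "N$1$1 + N$2$2 = 0"
  obtains u a where "norm u = 1" "N *v u = 0" "N *v vperp u = a *s u"
proof -
  obtain u where u: "norm u = 1" and Nu: "N *v u = 0"
    using nilpotent_unit_kernel[OF assms(1)] by blast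
  have "cinner (N *v vperp u) (vperp u) = 0"
    using trace_frame[OF u, of N] assms(2) Nu by (simp add: cinner_zero_left)
  then have "N *v vperp u = cinner (N *v vperp u) u *s u"
    using frame_decomp[OF u, of "N *v vperp u"] by simp
  then show ?thesis using that u Nu by blast
qed

section \<open>The disk algebra and Moebius maps\<close>

lemma disk_algebra_extend:
  assumes "continuous_on (cball 0 1) g" and "g holomorphic_on ball 0 1"
  shows "(\<lambda>w. if cmod w \<le> 1 then g w else 0) \<in> disk_algebra"
proof -
  have "continuous_on (cball 0 1) (\<lambda>w. if cmod w \<le> 1 then g w else 0)"
    by (rule continuous_on_eq[OF assms(1)]) auto
  moreover have "(\<lambda>w. if cmod w \<le> 1 then g w else 0) holomorphic_on ball 0 1"
    by (rule holomorphic_transform[OF assms(2)]) auto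
  ultimately show ?thesis by (auto simp: disk_algebra_def)
qed

lemma da_one_in_disk_algebra: "da_one \<in> disk_algebra"
  unfolding da_one_def by (rule disk_algebra_extend) (auto intro: holomorphic_intros)

lemma da_z_in_disk_algebra: "da_z \<in> disk_algebra"
  unfolding da_z_def by (rule disk_algebra_extend) (auto intro: holomorphic_intros)

lemma disk_algebra_linear:
  "f \<in> disk_algebra \<Longrightarrow> g \<in> disk_algebra \<Longrightarrow> (\<lambda>w. c * f w + g w) \<in> disk_algebra"
  unfolding disk_algebra_def by (auto intro!: continuous_intros holomorphic_intros)

lemma disk_algebra_mult:
  "f \<in> disk_algebra \<Longrightarrow> g \<in> disk_algebra \<Longrightarrow> (\<lambda>w. f w * g w) \<in> disk_algebra"
  unfolding disk_algebra_def by (auto intro!: continuous_intros holomorphic_intros)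

definition divided_diff :: "complex \<Rightarrow> (complex \<Rightarrow> complex) \<Rightarrow> complex \<Rightarrow> complex" where
  "divided_diff \<mu> h =
     (\<lambda>w. if cmod w \<le> 1 then (if w = \<mu> then deriv h \<mu> else (h w - h \<mu>) / (w - \<mu>)) else 0)"

lemma divided_diff_in_disk_algebra:
  assumes h: "h \<in> disk_algebra" and \<mu>: "cmod \<mu> < 1"
  shows "divided_diff \<mu> h \<in> disk_algebra"
proof -
  define g where "g = (\<lambda>w. if w = \<mu> then deriv h \<mu> else (h w - h \<mu>) / (w - \<mu>))"
  have h_cont: "continuous_on (cball 0 1) h" and h_hol: "h holomorphic_on ball 0 1"
    using h by (auto simp: disk_algebra_def)
  have g_hol: "g holomorphic_on ball 0 1"
    unfolding g_def by (rule pole_lemma[OF h_hol]) (simp add: \<mu>)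
  have "continuous (at w within cball 0 1) g" if w: "w \<in> cball 0 1" for w
  proof (cases "w = \<mu>")
    case True
    have "continuous (at \<mu>) g"
      using continuous_on_interior[OF holomorphic_on_imp_continuous_on[OF g_hol]] \<mu> by simp
    then show ?thesis using True continuous_at_imp_continuous_at_within by blast
  next
    case False
    have quotient: "continuous (at w within cball 0 1) (\<lambda>x. (h x - h \<mu>) / (x - \<mu>))"
      using h_cont w False
      by (intro continuous_intros) (auto simp: continuous_on_eq_continuous_within)
    show ?thesis
      by (rule continuous_transform_within[OF quotient, of "dist w \<mu>"])
        (use False w in \<open>auto simp: g_def dist_commute\<close>)
  qed
  then have "continuous_on (cball 0 1) g"
    by (simp add: continuous_on_eq_continuous_within)
  from disk_algebra_extend[OF this g_hol] show ?thesis
    unfolding divided_diff_def g_def .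
qed

lemma disk_algebra_factor:
  assumes "h \<in> disk_algebra"
  shows "h = (\<lambda>w. h \<mu> * da_one w + ((- \<mu>) * da_one w + da_z w) * divided_diff \<mu> h w)"
proof
  fix w
  show "h w = h \<mu> * da_one w + ((- \<mu>) * da_one w + da_z w) * divided_diff \<mu> h w"
    using assms by (cases "w = \<mu>")
      (auto simp: da_one_def da_z_def divided_diff_def disk_algebra_def field_simps)
qed

lemma Moebius_denom_nonzero:
  assumes "cmod w < 1" and "cmod z \<le> 1"
  shows "1 - cnj w * z \<noteq> 0"
proof -
  have "cmod (cnj w * z) < 1"
    using assms mult_left_le[of "cmod z" "cmod w"] by (simp add: norm_mult)
  then show ?thesis by auto
qed

lemma Moebius_function_norm_le_1:
  assumes "cmod w < 1" and "cmod z \<le> 1"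
  shows "cmod (Moebius_function 0 w z) \<le> 1"
proof -
  have "(cmod (1 - cnj w * z))\<^sup>2 - (cmod (z - w))\<^sup>2 = (1 - (cmod z)\<^sup>2) * (1 - (cmod w)\<^sup>2)"
    by (simp only: cmod_power2) (simp add: power2_eq_square algebra_simps)
  moreover have "0 \<le> (1 - (cmod z)\<^sup>2) * (1 - (cmod w)\<^sup>2)"
    using assms by (intro mult_nonneg_nonneg) (simp_all add: abs_square_le_1)
  ultimately have "(cmod (z - w))\<^sup>2 \<le> (cmod (1 - cnj w * z))\<^sup>2"
    by linarith
  then have "cmod (z - w) \<le> cmod (1 - cnj w * z)"
    by (simp add: power2_le_iff_abs_le)
  then show ?thesis
    using Moebius_denom_nonzero[OF assms]
    by (simp add: Moebius_function_simple norm_divide divide_le_eq_1)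
qed

lemma Moebius_function_has_field_derivative:
  assumes "1 - cnj w * z \<noteq> 0"
  shows "(Moebius_function 0 w has_field_derivative (1 - w * cnj w) / (1 - cnj w * z)\<^sup>2) (at z)"
proof -
  have "((\<lambda>z. (z - w) / (1 - cnj w * z)) has_field_derivative
      ((1 - 0) * (1 - cnj w * z) - (z - w) * (0 - cnj w * 1)) / ((1 - cnj w * z) * (1 - cnj w * z)))
      (at z)"
    using assms by (intro DERIV_divide DERIV_diff DERIV_ident DERIV_const DERIV_cmult)
  then show ?thesis
    unfolding Moebius_function_simple[abs_def]
    by (rule DERIV_cong) (simp add: power2_eq_square algebra_simps)
qed

lemma Moebius_function_holomorphic_cball:
  "cmod w < 1 \<Longrightarrow> Moebius_function 0 w holomorphic_on cball 0 1"
  unfolding Moebius_function_simple[abs_def] using Moebius_denom_nonzero[of w]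
  by (intro holomorphic_intros) auto

definition blaschke :: "complex \<Rightarrow> complex \<Rightarrow> complex" where
  "blaschke w = (\<lambda>z. if cmod z \<le> 1 then Moebius_function 0 w z else 0)"

lemma blaschke_in_disk_algebra:
  assumes "cmod w < 1"
  shows "blaschke w \<in> disk_algebra"
  using Moebius_function_holomorphic_cball[OF assms] unfolding blaschke_def
  by (intro disk_algebra_extend holomorphic_on_imp_continuous_on)
     (auto intro: holomorphic_on_subset)

lemma da_norm_blaschke_le_1: "cmod w < 1 \<Longrightarrow> da_norm (blaschke w) \<le> 1"
  unfolding da_norm_def by (rule cSUP_least) (auto simp: blaschke_def Moebius_function_norm_le_1)

lemma blaschke_self: "cmod w < 1 \<Longrightarrow> blaschke w w = 0"
  by (simp add: blaschke_def Moebius_function_eq_zero)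

lemma deriv_blaschke_self:
  assumes "cmod w < 1"
  shows "deriv (blaschke w) w = 1 / (1 - w * cnj w)"
proof -
  have "1 - cnj w * w \<noteq> 0" using Moebius_denom_nonzero[OF assms] assms by simp
  then have "(Moebius_function 0 w has_field_derivative 1 / (1 - w * cnj w)) (at w)"
    using Moebius_function_has_field_derivative[of w w] by (simp add: power2_eq_square mult.commute)
  then have "(blaschke w has_field_derivative 1 / (1 - w * cnj w)) (at w)"
    by (rule has_field_derivative_transform_within_open[of _ _ _ "ball 0 1"])
       (use assms in \<open>auto simp: blaschke_def\<close>)
  then show ?thesis by (rule DERIV_imp_deriv)
qed

lemma one_minus_cnj_self: "1 - w * cnj w = complex_of_real (1 - (cmod w)\<^sup>2)"
  by (simp only: of_real_diff of_real_1 complex_norm_square)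

lemma norm_one_minus_cnj_self:
  assumes "cmod w < 1"
  shows "cmod (1 - w * cnj w) = 1 - (cmod w)\<^sup>2"
proof -
  have "(cmod w)\<^sup>2 < 1" using assms by (simp add: abs_square_less_1)
  then show ?thesis unfolding one_minus_cnj_self norm_of_real by simp
qed

section \<open>Homomorphisms of the disk algebra into 2 x 2 matrices\<close>

lemma hom_eq_value_plus_deriv:
  fixes \<theta> :: "(complex \<Rightarrow> complex) \<Rightarrow> complex^2^2"
  assumes lin: "\<And>c f g. f \<in> disk_algebra \<Longrightarrow> g \<in> disk_algebra \<Longrightarrow>
                  \<theta> (\<lambda>w. c * f w + g w) = cscale c (\<theta> f) + \<theta> g"
    and mult: "\<And>f g. f \<in> disk_algebra \<Longrightarrow> g \<in> disk_algebra \<Longrightarrow>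
                  \<theta> (\<lambda>w. f w * g w) = \<theta> f ** \<theta> g"
    and unital: "\<theta> da_one = mat 1"
    and \<mu>: "cmod \<mu> < 1"
    and nilpotent: "(\<theta> da_z - mat \<mu>) ** (\<theta> da_z - mat \<mu>) = 0"
    and h: "h \<in> disk_algebra"
  shows "\<theta> h = cscale (h \<mu>) (mat 1) + cscale (deriv h \<mu>) (\<theta> da_z - mat \<mu>)"
proof -
  define N where "N = \<theta> da_z - mat \<mu>"
  define e where "e = (\<lambda>w. (- \<mu>) * da_one w + da_z w)"
  have e: "e \<in> disk_algebra"
    unfolding e_def by (intro disk_algebra_linear da_one_in_disk_algebra da_z_in_disk_algebra)
  have "\<theta> e = N"
    using lin[OF da_one_in_disk_algebra da_z_in_disk_algebra, of "- \<mu>"]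
    by (simp only: e_def N_def unital cscale_one_add)
  have expand: "\<theta> g = cscale (g \<mu>) (mat 1) + N ** \<theta> (divided_diff \<mu> g)"
    if g: "g \<in> disk_algebra" for g
  proof -
    have q: "divided_diff \<mu> g \<in> disk_algebra"
      using divided_diff_in_disk_algebra[OF g \<mu>] .
    have "\<theta> g = \<theta> (\<lambda>w. g \<mu> * da_one w + e w * divided_diff \<mu> g w)"
      using arg_cong[OF disk_algebra_factor[OF g, of \<mu>], of \<theta>] by (simp add: e_def)
    also have "\<dots> = cscale (g \<mu>) (mat 1) + \<theta> e ** \<theta> (divided_diff \<mu> g)"
      using lin[OF da_one_in_disk_algebra disk_algebra_mult[OF e q]] mult[OF e q] by (simp add: unital)
    finally show ?thesis using \<open>\<theta> e = N\<close> by simp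
  qed
  have "\<theta> h = cscale (h \<mu>) (mat 1)
      + N ** (cscale (divided_diff \<mu> h \<mu>) (mat 1) + N ** \<theta> (divided_diff \<mu> (divided_diff \<mu> h)))"
    using expand[OF h] expand[OF divided_diff_in_disk_algebra[OF h \<mu>]] by simp
  also have "\<dots> = cscale (h \<mu>) (mat 1) + cscale (deriv h \<mu>) N"
    using nilpotent \<mu>
    by (simp add: matrix_add_ldistrib matrix_mul_cscale_one matrix_mul_assoc N_def divided_diff_def)
  finally show ?thesis unfolding N_def .
qed

lemma frame_off_diagonal_bound:
  fixes \<theta> :: "(complex \<Rightarrow> complex) \<Rightarrow> complex^2^2"
    and \<alpha> :: "(complex \<Rightarrow> complex) \<Rightarrow> (complex \<Rightarrow> complex)"
  assumes repr: "\<And>h. h \<in> disk_algebra \<Longrightarrow> \<theta> h = cscale (h \<mu>) (mat 1) + cscale (deriv h \<mu>) N"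
    and alpha_maps: "\<And>f. f \<in> disk_algebra \<Longrightarrow> \<alpha> f \<in> disk_algebra"
    and contr: "\<And>f. f \<in> disk_algebra \<Longrightarrow> da_norm f \<le> 1 \<Longrightarrow>
                  m2_norm (cscale (1/2) (\<theta> f + cadj (\<theta> (\<alpha> f)))) \<le> 1"
    and \<mu>: "cmod \<mu> < 1"
    and u: "norm u = 1" and Nu: "N *v u = 0" and Nv: "N *v vperp u = a *s u"
  shows "cmod a \<le> 2 * cmod (1 - \<mu> * cnj \<mu>)"
proof -
  define r where "r = 1 - (cmod \<mu>)\<^sup>2"
  have r: "r > 0" using \<mu> by (simp add: r_def abs_square_less_1)
  define f where "f = blaschke \<mu>"
  have f: "f \<in> disk_algebra" unfolding f_def by (rule blaschke_in_disk_algebra[OF \<mu>])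
  define B where "B = cscale (1/2) (\<theta> f + cadj (\<theta> (\<alpha> f)))"
  have "m2_norm B \<le> 1"
    unfolding B_def f_def using contr f da_norm_blaschke_le_1[OF \<mu>] by (simp add: f_def)
  moreover have "cmod (cinner (B *v vperp u) u) \<le> m2_norm B"
  proof -
    have "cmod (cinner (B *v vperp u) u) \<le> norm (B *v vperp u)" by (rule norm_cinner_le[OF u])
    also have "\<dots> \<le> onorm ((*v) B) * norm (vperp u)" by (rule onorm) simp
    finally show ?thesis by (simp add: u m2_norm_def)
  qed
  moreover have "cinner (B *v vperp u) u = a / (2 * complex_of_real r)"
  proof -
    have "\<theta> f = cscale (1 / complex_of_real r) N"
      using repr[OF f] \<mu>
      unfolding f_def blaschke_self[OF \<mu>] deriv_blaschke_self[OF \<mu>] one_minus_cnj_self r_def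
      by (simp add: vec_eq_iff forall_2 cscale_def)
    moreover have "\<theta> (\<alpha> f) *v u = \<alpha> f \<mu> *s u"
      using repr[OF alpha_maps[OF f]] by (simp add: matrix_vector_mult_add_rdistrib cscale_mult_vec Nu)
    \<comment> \<open>the adjoint term drops out: u is an eigenvector of every \<theta> g\<close>
    ultimately show ?thesis
      unfolding B_def cscale_mult_vec matrix_vector_mult_add_rdistrib
        cinner_scale_left cinner_add_left cinner_cadj
      using r by (simp add: Nv cscale_mult_vec cinner_scale_left cinner_unit[OF u] cinner_vperp)
  qed
  ultimately have "cmod (a / (2 * complex_of_real r)) \<le> 1"
    by (metis order_trans)
  moreover have "cmod (a / (2 * complex_of_real r)) = cmod a / (2 * r)"
    using r by (simp add: norm_divide norm_mult)
  ultimately show ?thesis using r by (simp add: r_def norm_one_minus_cnj_self[OF \<mu>] divide_le_eq)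
qed

section \<open>A matrix Schwarz-Pick inequality\<close>

definition sqnorm :: "nat \<Rightarrow> (nat \<Rightarrow> complex) \<Rightarrow> real" where
  "sqnorm k x = (\<Sum>i<k. (cmod (x i))\<^sup>2)"

definition matvec :: "nat \<Rightarrow> (nat \<Rightarrow> nat \<Rightarrow> complex) \<Rightarrow> (nat \<Rightarrow> complex) \<Rightarrow> nat \<Rightarrow> complex" where
  "matvec k M x i = (\<Sum>j<k. M i j * x j)"

definition contractive :: "nat \<Rightarrow> (nat \<Rightarrow> nat \<Rightarrow> complex) \<Rightarrow> bool" where
  "contractive k M \<longleftrightarrow> (\<forall>x. sqnorm k (matvec k M x) \<le> sqnorm k x)"

lemma sqnorm_nonneg: "0 \<le> sqnorm k x"
  by (simp add: sqnorm_def sum_nonneg)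

lemma sqnorm_zero [simp]: "sqnorm k (\<lambda>_. 0) = 0"
  by (simp add: sqnorm_def)

lemma sqnorm_eq_0D: "sqnorm k x = 0 \<Longrightarrow> i < k \<Longrightarrow> x i = 0"
  unfolding sqnorm_def by (subst (asm) sum_nonneg_eq_0_iff) auto

lemma sqnorm_scale: "sqnorm k (\<lambda>i. c * x i) = (cmod c)\<^sup>2 * sqnorm k x"
  by (simp add: sqnorm_def norm_mult power_mult_distrib sum_distrib_left)

lemma matvec_scale: "matvec k M (\<lambda>j. c * x j) = (\<lambda>i. c * matvec k M x i)"
  by (simp add: matvec_def fun_eq_iff sum_distrib_left algebra_simps)

lemma sqnorm_add_mult:
  assumes "cmod \<zeta> = 1"
  shows "sqnorm k (\<lambda>j. p j + q j * \<zeta>) = sqnorm k p + sqnorm k q + 2 * Re ((\<Sum>j<k. cnj (p j) * q j) * \<zeta>)"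
proof -
  have "(cmod (p j + q j * \<zeta>))\<^sup>2 = (cmod (p j))\<^sup>2 + (cmod (q j * \<zeta>))\<^sup>2
      + 2 * Re (cnj (p j) * (q j * \<zeta>))" for j
    by (simp only: cmod_power2) (simp add: power2_eq_square algebra_simps)
  then have "(cmod (p j + q j * \<zeta>))\<^sup>2 = (cmod (p j))\<^sup>2 + (cmod (q j))\<^sup>2
      + 2 * Re (cnj (p j) * q j * \<zeta>)" for j
    using assms by (simp add: norm_mult mult.assoc)
  then show ?thesis
    by (simp add: sqnorm_def sum.distrib sum_distrib_left sum_distrib_right)
qed

lemma contractive_if_unit_ball:
  assumes unit: "\<And>x. sqnorm k x \<le> 1 \<Longrightarrow> sqnorm k (matvec k M x) \<le> 1"
  shows "contractive k M"
  unfolding contractive_def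
proof
  fix x
  show "sqnorm k (matvec k M x) \<le> sqnorm k x"
  proof (cases "sqnorm k x = 0")
    case True
    then have "matvec k M x = (\<lambda>i. 0)"
      unfolding matvec_def using sqnorm_eq_0D[OF True] by (auto simp: fun_eq_iff intro!: sum.neutral)
    then show ?thesis using True by (simp add: sqnorm_def)
  next
    case False
    then have pos: "sqnorm k x > 0" using sqnorm_nonneg[of k x] by simp
    define s where "s = sqrt (sqnorm k x)"
    have s: "s > 0" "s\<^sup>2 = sqnorm k x" using pos sqnorm_nonneg[of k x] by (simp_all add: s_def)
    have "sqnorm k (\<lambda>j. complex_of_real (1/s) * x j) = 1"
      unfolding sqnorm_scale using s pos by (simp add: power_divide norm_divide)
    then have "sqnorm k (matvec k M (\<lambda>j. complex_of_real (1/s) * x j)) \<le> 1" by (rule unit[OF eq_refl])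
    then have "(1/s)\<^sup>2 * sqnorm k (matvec k M x) \<le> 1"
      unfolding matvec_scale sqnorm_scale using s by (simp add: norm_divide)
    then show ?thesis using s pos by (simp add: power_divide divide_le_eq)
  qed
qed

lemma contractive_pairing_le:
  assumes "contractive k M"
  shows "cmod (\<Sum>i<k. cnj (y i) * matvec k M x i) \<le> (sqnorm k x + sqnorm k y) / 2"
proof -
  have "cmod (\<Sum>i<k. cnj (y i) * matvec k M x i) \<le> (\<Sum>i<k. cmod (y i) * cmod (matvec k M x i))"
    by (rule order_trans[OF norm_sum]) (simp add: norm_mult)
  also have "\<dots> \<le> (\<Sum>i<k. ((cmod (y i))\<^sup>2 + (cmod (matvec k M x i))\<^sup>2) / 2)"
  proof (rule sum_mono)
    fix i
    show "cmod (y i) * cmod (matvec k M x i) \<le> ((cmod (y i))\<^sup>2 + (cmod (matvec k M x i))\<^sup>2) / 2"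
      using sum_squares_bound[of "cmod (y i)" "cmod (matvec k M x i)"] by simp
  qed
  also have "\<dots> = (sqnorm k y + sqnorm k (matvec k M x)) / 2"
    by (simp add: sqnorm_def sum.distrib sum_divide_distrib[symmetric])
  also have "\<dots> \<le> (sqnorm k x + sqnorm k y) / 2"
    using assms by (simp add: contractive_def)
  finally show ?thesis .
qed

lemma circle_exp_has_integral_0:
  "((\<lambda>x::real. exp (2 * of_real pi * \<i> * of_real x)) has_integral 0) {0..1}"
proof -
  have "((\<lambda>x::real. 2 * pi * \<i> * 1 * exp (2 * of_real pi * \<i> * of_real x)) has_integral
          (circlepath 0 1 1 - circlepath 0 1 0)) {0..1}"
    using fundamental_theorem_of_calculus[of 0 1 "circlepath 0 1", OF _ has_vector_derivative_circlepath]
    by simp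
  moreover have "circlepath 0 1 1 - circlepath 0 1 0 = 0"
    using pathfinish_circlepath[of 0 1] pathstart_circlepath[of 0 1]
    by (simp add: pathstart_def pathfinish_def)
  ultimately have "((\<lambda>x::real. 2 * pi * \<i> * 1 * exp (2 * of_real pi * \<i> * of_real x))
      has_integral 0) {0..1}"
    by simp
  then show ?thesis
    using has_integral_mult_right_iff[of "2 * pi * \<i> * 1"
        "\<lambda>x::real. exp (2 * of_real pi * \<i> * of_real x)" 0]
    by simp
qed

lemma norm_deriv_0_le_circle_majorant:
  fixes H :: "complex \<Rightarrow> complex"
  assumes cont: "continuous_on (cball 0 1) H" and hol: "H holomorphic_on ball 0 1"
    and bound: "\<And>\<zeta>. cmod \<zeta> = 1 \<Longrightarrow> cmod (H \<zeta>) \<le> X + Re (C * \<zeta>)"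
  shows "cmod (deriv H 0) \<le> X"
proof -
  define e where "e = (\<lambda>x::real. exp (2 * of_real pi * \<i> * of_real x))"
  have e_unit: "cmod (e x) = 1" for x
  proof -
    have "2 * of_real pi * \<i> * of_real x = \<i> * of_real (2 * pi * x)" by simp
    then show ?thesis unfolding e_def by (simp only: norm_exp_i_times)
  qed
  have "((\<lambda>u. H u / (u - 0) ^ Suc 1) has_contour_integral (2 * pi * \<i> / fact 1 * (deriv ^^ 1) H 0))
      (circlepath 0 1)"
    by (rule Cauchy_has_contour_integral_higher_derivative_circlepath[OF cont hol]) simp
  then have "((\<lambda>x. H (e x) / (e x - 0) ^ Suc 1 * vector_derivative (circlepath 0 1) (at x within {0..1}))
      has_integral 2 * pi * \<i> * deriv H 0) {0..1}"
    unfolding has_contour_integral_def by (simp add: circlepath e_def)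
  then have integral: "((\<lambda>x. 2 * pi * \<i> * H (e x) / e x) has_integral 2 * pi * \<i> * deriv H 0) {0..1}"
    by (rule has_integral_eq[rotated]) (simp add: vector_derivative_circlepath01 e_def power2_eq_square)
  moreover have majorant: "((\<lambda>x. 2 * pi * (X + Re (C * e x))) has_integral 2 * pi * X) {0..1}"
  proof -
    have "((\<lambda>x. Re (C * e x)) has_integral 0) {0..1}"
      using has_integral_linear[OF has_integral_mult_right[OF circle_exp_has_integral_0, of C]
        bounded_linear_Re]
      by (simp add: o_def e_def)
    from has_integral_mult_right
        [OF has_integral_add[OF has_integral_const_real[of X 0 1] this], of "2 * pi"]
    show ?thesis by simp
  qed
  moreover have "norm (2 * pi * \<i> * H (e x) / e x) \<le> 2 * pi * (X + Re (C * e x))" for x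
    using bound[OF e_unit[of x]] e_unit[of x] by (simp add: norm_mult norm_divide norm_power)
  ultimately have "norm (integral {0..1} (\<lambda>x. 2 * pi * \<i> * H (e x) / e x))
      \<le> integral {0..1} (\<lambda>x. 2 * pi * (X + Re (C * e x)))"
    by (intro integral_norm_bound_integral) (auto simp: has_integral_integrable)
  then have "norm (2 * pi * \<i> * deriv H 0) \<le> 2 * pi * X"
    using integral_unique[OF integral] integral_unique[OF majorant] by simp
  then show ?thesis by (simp add: norm_mult)
qed

lemma pairing_has_field_derivative_0:
  assumes G: "\<And>i j. i < k \<Longrightarrow> j < k \<Longrightarrow> (G i j has_field_derivative G' i j) (at 0)"
  shows "((\<lambda>w. \<Sum>i<k. (cnj (s i) * w + cnj (t i)) * matvec k (\<lambda>i j. G i j w) (\<lambda>j. p j + q j * w) i)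
      has_field_derivative
        (\<Sum>i<k. cnj (s i) * matvec k (\<lambda>i j. G i j 0) p i
                + cnj (t i) * (matvec k (\<lambda>i j. G i j 0) q i + matvec k G' p i))) (at 0)"
proof -
  have entry: "((\<lambda>w. G i j w * (p j + q j * w)) has_field_derivative G' i j * p j + G i j 0 * q j) (at 0)"
    if "i < k" "j < k" for i j
    by (rule DERIV_cong[OF DERIV_mult[OF G[OF that]
        DERIV_add[OF DERIV_const DERIV_cmult[OF DERIV_ident]]]])
       (simp add: algebra_simps)
  have row: "((\<lambda>w. matvec k (\<lambda>i j. G i j w) (\<lambda>j. p j + q j * w) i) has_field_derivative
      matvec k G' p i + matvec k (\<lambda>i j. G i j 0) q i) (at 0)" if "i < k" for i
    unfolding matvec_def sum.distrib[symmetric] by (rule DERIV_sum) (use entry that in auto)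
  show ?thesis
    by (rule DERIV_cong[OF DERIV_sum])
       (rule DERIV_mult[OF DERIV_add[OF DERIV_cmult[OF DERIV_ident] DERIV_const] row], simp,
        simp add: matvec_def algebra_simps sum.distrib)
qed

lemma pairing_circle_bound:
  assumes "contractive k M" and \<zeta>: "cmod \<zeta> = 1"
  shows "cmod (\<Sum>i<k. (cnj (s i) * \<zeta> + cnj (t i)) * matvec k M (\<lambda>j. p j + q j * \<zeta>) i)
    \<le> (sqnorm k p + sqnorm k q + sqnorm k s + sqnorm k t) / 2
       + Re (((\<Sum>j<k. cnj (p j) * q j) + (\<Sum>i<k. cnj (s i) * t i)) * \<zeta>)"
proof -
  have "cnj (s i) * \<zeta> + cnj (t i) = cnj (t i + s i * cnj \<zeta>)" for i
    by (simp add: mult.commute)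
  then have "cmod (\<Sum>i<k. (cnj (s i) * \<zeta> + cnj (t i)) * matvec k M (\<lambda>j. p j + q j * \<zeta>) i)
      \<le> (sqnorm k (\<lambda>j. p j + q j * \<zeta>) + sqnorm k (\<lambda>i. t i + s i * cnj \<zeta>)) / 2"
    using contractive_pairing_le[OF assms(1)] by presburger
  moreover have "sqnorm k (\<lambda>i. t i + s i * cnj \<zeta>)
      = sqnorm k t + sqnorm k s + 2 * Re ((\<Sum>i<k. cnj (t i) * s i) * cnj \<zeta>)"
    by (rule sqnorm_add_mult) (simp add: \<zeta>)
  moreover have "cnj ((\<Sum>i<k. cnj (t i) * s i) * cnj \<zeta>) = (\<Sum>i<k. cnj (s i) * t i) * \<zeta>"
    by (simp add: mult.commute)
  then have "Re ((\<Sum>i<k. cnj (t i) * s i) * cnj \<zeta>) = Re ((\<Sum>i<k. cnj (s i) * t i) * \<zeta>)"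
    by (metis cnj.sel(1))
  ultimately show ?thesis
    unfolding sqnorm_add_mult[OF \<zeta>] distrib_right plus_complex.sel by argo
qed

lemma disk_algebra_comp_Moebius:
  assumes f: "f \<in> disk_algebra" and \<mu>: "cmod \<mu> < 1"
  shows "continuous_on (cball 0 1) (\<lambda>w. f (Moebius_function 0 (- \<mu>) w))"
    and "(\<lambda>w. f (Moebius_function 0 (- \<mu>) w)) holomorphic_on ball 0 1"
    and "((\<lambda>w. f (Moebius_function 0 (- \<mu>) w))
        has_field_derivative deriv f \<mu> * (1 - \<mu> * cnj \<mu>)) (at 0)"
proof -
  let ?\<phi> = "Moebius_function 0 (- \<mu>)"
  have f_cont: "continuous_on (cball 0 1) f" and f_hol: "f holomorphic_on ball 0 1"
    using f by (auto simp: disk_algebra_def)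
  have \<phi>_hol: "?\<phi> holomorphic_on cball 0 1"
    using Moebius_function_holomorphic_cball[of "- \<mu>"] \<mu> by simp
  have "?\<phi> ` cball 0 1 \<subseteq> cball 0 1"
    using Moebius_function_norm_le_1[of "- \<mu>"] \<mu> by auto
  from continuous_on_compose2[OF f_cont holomorphic_on_imp_continuous_on[OF \<phi>_hol] this]
  show "continuous_on (cball 0 1) (\<lambda>w. f (?\<phi> w))" .
  have "?\<phi> ` ball 0 1 \<subseteq> ball 0 1"
    using Moebius_function_norm_lt_1[of "- \<mu>"] \<mu> by auto
  from holomorphic_on_compose_gen[OF holomorphic_on_subset[OF \<phi>_hol] f_hol this]
  show "(\<lambda>w. f (?\<phi> w)) holomorphic_on ball 0 1" by (simp add: o_def)
  have "(f has_field_derivative deriv f (?\<phi> 0)) (at (?\<phi> 0))"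
    by (rule holomorphic_derivI[OF f_hol]) (use \<mu> in \<open>auto simp: Moebius_function_simple\<close>)
  moreover have "(?\<phi> has_field_derivative 1 - \<mu> * cnj \<mu>) (at 0)"
    using Moebius_function_has_field_derivative[of "- \<mu>" 0] by simp
  ultimately show "((\<lambda>w. f (?\<phi> w)) has_field_derivative deriv f \<mu> * (1 - \<mu> * cnj \<mu>)) (at 0)"
    using DERIV_chain2 by (fastforce simp: Moebius_function_simple)
qed

lemma matrix_schwarz_pick_pairing:
  fixes F :: "nat \<Rightarrow> nat \<Rightarrow> complex \<Rightarrow> complex"
  assumes F: "\<And>i j. i < k \<Longrightarrow> j < k \<Longrightarrow> F i j \<in> disk_algebra"
    and contr: "\<And>w. cmod w \<le> 1 \<Longrightarrow> contractive k (\<lambda>i j. F i j w)"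
    and \<mu>: "cmod \<mu> < 1"
  shows "cmod (\<Sum>i<k. cnj (s i) * matvec k (\<lambda>i j. F i j \<mu>) p i
            + cnj (t i) * (matvec k (\<lambda>i j. F i j \<mu>) q i
                           + matvec k (\<lambda>i j. deriv (F i j) \<mu> * (1 - \<mu> * cnj \<mu>)) p i))
         \<le> (sqnorm k p + sqnorm k q + sqnorm k s + sqnorm k t) / 2"
proof -
  define \<phi> where "\<phi> = Moebius_function 0 (- \<mu>)"
  define H where "H = (\<lambda>w. \<Sum>i<k. (cnj (s i) * w + cnj (t i))
                                  * matvec k (\<lambda>i j. F i j (\<phi> w)) (\<lambda>j. p j + q j * w) i)"
  have \<phi>0: "\<phi> 0 = \<mu>" by (simp add: \<phi>_def Moebius_function_simple)
  have G: "((\<lambda>w. F i j (\<phi> w)) has_field_derivative deriv (F i j) \<mu> * (1 - \<mu> * cnj \<mu>)) (at 0)"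
    if "i < k" "j < k" for i j
    unfolding \<phi>_def by (rule disk_algebra_comp_Moebius(3)[OF F[OF that] \<mu>])
  have "(H has_field_derivative (\<Sum>i<k. cnj (s i) * matvec k (\<lambda>i j. F i j \<mu>) p i
            + cnj (t i) * (matvec k (\<lambda>i j. F i j \<mu>) q i
                           + matvec k (\<lambda>i j. deriv (F i j) \<mu> * (1 - \<mu> * cnj \<mu>)) p i))) (at 0)"
    using pairing_has_field_derivative_0[where k = k and G = "\<lambda>i j w. F i j (\<phi> w)"
        and G' = "\<lambda>i j. deriv (F i j) \<mu> * (1 - \<mu> * cnj \<mu>)"
        and s = s and t = t and p = p and q = q, OF G]
    unfolding H_def \<phi>0 .
  then have "deriv H 0 = (\<Sum>i<k. cnj (s i) * matvec k (\<lambda>i j. F i j \<mu>) p i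
            + cnj (t i) * (matvec k (\<lambda>i j. F i j \<mu>) q i
                           + matvec k (\<lambda>i j. deriv (F i j) \<mu> * (1 - \<mu> * cnj \<mu>)) p i))"
    by (rule DERIV_imp_deriv)
  moreover have "cmod (deriv H 0) \<le> (sqnorm k p + sqnorm k q + sqnorm k s + sqnorm k t) / 2"
  proof (rule norm_deriv_0_le_circle_majorant)
    show "continuous_on (cball 0 1) H"
      unfolding H_def matvec_def \<phi>_def
      by (intro continuous_intros disk_algebra_comp_Moebius(1)[OF F \<mu>]) auto
    show "H holomorphic_on ball 0 1"
      unfolding H_def matvec_def \<phi>_def
      by (intro holomorphic_intros disk_algebra_comp_Moebius(2)[OF F \<mu>]) auto
    show "cmod (H \<zeta>) \<le> (sqnorm k p + sqnorm k q + sqnorm k s + sqnorm k t) / 2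
        + Re (((\<Sum>j<k. cnj (p j) * q j) + (\<Sum>i<k. cnj (s i) * t i)) * \<zeta>)" if "cmod \<zeta> = 1" for \<zeta>
      unfolding H_def
      by (rule pairing_circle_bound[OF contr that])
         (use Moebius_function_norm_le_1[of "- \<mu>" \<zeta>] \<mu> that in \<open>simp add: \<phi>_def\<close>)
  qed
  ultimately show ?thesis by simp
qed

lemma matrix_schwarz_pick:
  fixes F :: "nat \<Rightarrow> nat \<Rightarrow> complex \<Rightarrow> complex"
  assumes F: "\<And>i j. i < k \<Longrightarrow> j < k \<Longrightarrow> F i j \<in> disk_algebra"
    and contr: "\<And>w. cmod w \<le> 1 \<Longrightarrow> contractive k (\<lambda>i j. F i j w)"
    and \<mu>: "cmod \<mu> < 1"
  shows "sqnorm k (matvec k (\<lambda>i j. F i j \<mu>) p)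
       + sqnorm k (\<lambda>i. matvec k (\<lambda>i j. F i j \<mu>) q i
                      + (1 - \<mu> * cnj \<mu>) * matvec k (\<lambda>i j. deriv (F i j) \<mu>) p i)
       \<le> sqnorm k p + sqnorm k q"
    (is "sqnorm k ?s + sqnorm k ?t \<le> _")
proof -
  have "matvec k (\<lambda>i j. deriv (F i j) \<mu> * (1 - \<mu> * cnj \<mu>)) p i
      = (1 - \<mu> * cnj \<mu>) * matvec k (\<lambda>i j. deriv (F i j) \<mu>) p i" for i
    by (simp add: matvec_def sum_distrib_left mult_ac)
  then have bound: "cmod (\<Sum>i<k. cnj (?s i) * ?s i + cnj (?t i) * ?t i)
      \<le> (sqnorm k p + sqnorm k q + sqnorm k ?s + sqnorm k ?t) / 2"
    using matrix_schwarz_pick_pairing[OF F contr \<mu>, of ?s p ?t q] by simp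
  have "(\<Sum>i<k. cnj (?s i) * ?s i + cnj (?t i) * ?t i) = complex_of_real (sqnorm k ?s + sqnorm k ?t)"
    unfolding sqnorm_def of_real_add of_real_sum complex_norm_square
    by (simp add: sum.distrib mult.commute)
  then have "cmod (\<Sum>i<k. cnj (?s i) * ?s i + cnj (?t i) * ?t i) = sqnorm k ?s + sqnorm k ?t"
    by (simp only: norm_of_real abs_of_nonneg add_nonneg_nonneg sqnorm_nonneg)
  then show ?thesis using bound by argo
qed

section \<open>Norms of block matrices\<close>

lemma sqnorm_rescaled_le:
  assumes sp: "\<And>p q. sqnorm k (matvec k A p) + sqnorm k (\<lambda>i. matvec k A q i + c * matvec k D p i)
                       \<le> sqnorm k p + sqnorm k q"
    and c: "c \<noteq> 0" and a: "cmod a \<le> L * cmod c"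
  shows "sqnorm k (matvec k A p) + sqnorm k (\<lambda>i. matvec k A q i + a * matvec k D p i)
           \<le> max 1 (L\<^sup>2) * (sqnorm k p + sqnorm k q)"
proof -
  define \<kappa> where "\<kappa> = a / c"
  have c\<kappa>: "c * \<kappa> = a" using c by (simp add: \<kappa>_def)
  define K where "K = (cmod \<kappa>)\<^sup>2"
  define P where "P = sqnorm k (matvec k A p)"
  define Q where "Q = sqnorm k (\<lambda>i. matvec k A q i + a * matvec k D p i)"
  have "cmod \<kappa> \<le> L"
    using a c by (simp add: \<kappa>_def norm_divide divide_le_eq)
  then have K_le: "K \<le> L\<^sup>2"
    unfolding K_def by (intro power_mono) simp_all
  have scaled: "K * P + Q \<le> K * sqnorm k p + sqnorm k q"
    using sp[of "\<lambda>j. \<kappa> * p j" q]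
    unfolding P_def Q_def K_def matvec_scale sqnorm_scale mult.assoc[symmetric] c\<kappa> .
  have P: "P \<le> sqnorm k p"
    using sp[of p "\<lambda>_. 0"] sqnorm_nonneg[of k "\<lambda>i. matvec k A (\<lambda>_. 0) i + c * matvec k D p i"]
    unfolding P_def by simp
  have "P + Q \<le> max 1 K * (sqnorm k p + sqnorm k q)"
  proof (cases "K \<le> 1")
    case True
    then have "(1 - K) * P \<le> (1 - K) * sqnorm k p"
      using P by (intro mult_left_mono) auto
    then show ?thesis using True scaled by (simp add: algebra_simps)
  next
    case False
    then have "P \<le> K * P" "sqnorm k q \<le> K * sqnorm k q"
      using sqnorm_nonneg[of k q] sqnorm_nonneg[of k "matvec k A p"]
      by (simp_all add: P_def mult_le_cancel_right1 not_less)
    then show ?thesis using False scaled by (simp add: algebra_simps)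
  qed
  also have "\<dots> \<le> max 1 (L\<^sup>2) * (sqnorm k p + sqnorm k q)"
    using K_le by (intro mult_right_mono) (auto simp: add_nonneg_nonneg sqnorm_nonneg)
  finally show ?thesis unfolding P_def Q_def .
qed

lemma sqrt_sqnorm_matvec_le_entry_sum:
  assumes "sqnorm k x \<le> 1"
  shows "sqrt (sqnorm k (matvec k M x)) \<le> (\<Sum>i<k. \<Sum>j<k. cmod (M i j))"
proof -
  have x: "cmod (x j) \<le> 1" if "j < k" for j
  proof -
    have "(cmod (x j))\<^sup>2 \<le> sqnorm k x"
      unfolding sqnorm_def by (rule member_le_sum) (use that in auto)
    then have "(cmod (x j))\<^sup>2 \<le> 1" using assms by linarith
    then show ?thesis by (simp add: abs_square_le_1)
  qed
  have "sqrt (sqnorm k (matvec k M x)) = L2_set (\<lambda>i. cmod (matvec k M x i)) {..<k}"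
    by (simp add: sqnorm_def L2_set_def)
  also have "\<dots> \<le> (\<Sum>i<k. cmod (matvec k M x i))"
    by (rule L2_set_le_sum) simp
  also have "\<dots> \<le> (\<Sum>i<k. \<Sum>j<k. cmod (M i j))"
    unfolding matvec_def
    by (intro sum_mono order_trans[OF norm_sum]) (simp add: norm_mult mult_left_le x)
  finally show ?thesis .
qed

lemma bdd_above_sqrt_sqnorm_matvec:
  "bdd_above ((\<lambda>x. sqrt (sqnorm k (matvec k M x))) ` {x. sqnorm k x \<le> 1})"
  by (rule bdd_aboveI[of _ "\<Sum>i<k. \<Sum>j<k. cmod (M i j)"]) (auto intro: sqrt_sqnorm_matvec_le_entry_sum)

lemma cmat_norm_eq_SUP: "cmat_norm k M = (SUP x\<in>{x. sqnorm k x \<le> 1}. sqrt (sqnorm k (matvec k M x)))"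
  by (simp add: cmat_norm_def sqnorm_def matvec_def)

lemma cmat_norm_le_entry_sum: "cmat_norm k M \<le> (\<Sum>i<k. \<Sum>j<k. cmod (M i j))"
  unfolding cmat_norm_eq_SUP
  by (rule cSUP_least) (auto intro: sqrt_sqnorm_matvec_le_entry_sum exI[of _ "\<lambda>_. 0"])

lemma contractive_if_cmat_norm_le_1:
  assumes "cmat_norm k M \<le> 1"
  shows "contractive k M"
proof (rule contractive_if_unit_ball)
  fix x assume "sqnorm k x \<le> 1"
  then have "sqrt (sqnorm k (matvec k M x)) \<le> cmat_norm k M"
    unfolding cmat_norm_eq_SUP by (intro cSUP_upper bdd_above_sqrt_sqnorm_matvec) simp
  then have "sqrt (sqnorm k (matvec k M x)) \<le> 1" using assms by linarith
  then show "sqnorm k (matvec k M x) \<le> 1" by simp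
qed

lemma cmat_norm_le_da_mat_norm:
  assumes F: "\<forall>i<k. \<forall>j<k. F i j \<in> disk_algebra" and w: "cmod w \<le> 1"
  shows "cmat_norm k (\<lambda>i j. F i j w) \<le> da_mat_norm k F"
proof -
  have "continuous_on (cball 0 1) (\<lambda>w. \<Sum>i<k. \<Sum>j<k. cmod (F i j w))"
    using F by (intro continuous_intros) (auto simp: disk_algebra_def)
  then have "bounded ((\<lambda>w. \<Sum>i<k. \<Sum>j<k. cmod (F i j w)) ` cball 0 1)"
    by (intro compact_imp_bounded compact_continuous_image compact_cball)
  then obtain B where B: "\<forall>w\<in>cball 0 1. (\<Sum>i<k. \<Sum>j<k. cmod (F i j w)) \<le> B"
    by (auto dest!: bounded_imp_bdd_above simp: bdd_above_def)
  have "bdd_above ((\<lambda>w. cmat_norm k (\<lambda>i j. F i j w)) ` cball 0 1)"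
    by (rule bdd_aboveI[of _ B]) (use B in \<open>auto intro: order_trans[OF cmat_norm_le_entry_sum]\<close>)
  then show ?thesis
    unfolding da_mat_norm_def by (rule cSUP_upper[rotated]) (simp add: w)
qed

lemma blk_norm_le_frame:
  fixes N :: "complex^2^2"
  assumes u: "norm u = 1" and Nu: "N *v u = 0" and Nv: "N *v vperp u = a *s u"
    and B: "\<And>i j. i < k \<Longrightarrow> j < k \<Longrightarrow> B i j = cscale (A i j) (mat 1) + cscale (D i j) N"
    and bound: "\<And>p q. sqnorm k (matvec k A p) + sqnorm k (\<lambda>i. matvec k A q i + a * matvec k D p i)
                        \<le> C * (sqnorm k p + sqnorm k q)"
    and C: "0 \<le> C"
  shows "blk_norm k B \<le> sqrt C"
  \<comment> \<open>in the frame (vperp u, u) each block B i j is [[A i j, 0], [a * D i j, A i j]]\<close>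
  unfolding blk_norm_def
proof (rule cSUP_least)
  show "{x::nat \<Rightarrow> complex^2. (\<Sum>i<k. (norm (x i))\<^sup>2) \<le> 1} \<noteq> {}"
    by (auto intro: exI[of _ "\<lambda>_. 0"])
next
  fix x :: "nat \<Rightarrow> complex^2"
  assume "x \<in> {x. (\<Sum>i<k. (norm (x i))\<^sup>2) \<le> 1}"
  then have x: "(\<Sum>i<k. (norm (x i))\<^sup>2) \<le> 1" by simp
  define p where "p = (\<lambda>j. cinner (x j) (vperp u))"
  define q where "q = (\<lambda>j. cinner (x j) u)"
  have "sqnorm k p + sqnorm k q = (\<Sum>i<k. (norm (x i))\<^sup>2)"
    by (simp add: sqnorm_def p_def q_def norm_frame[OF u] sum.distrib)
  then have pq: "sqnorm k p + sqnorm k q \<le> 1" using x by simp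
  have "B i j *v x j = (A i j * p j) *s vperp u + (A i j * q j + a * (D i j * p j)) *s u"
    if "i < k" "j < k" for i j
  proof -
    have "B i j *v x j = (cscale (A i j) (mat 1) + cscale (D i j) N) *v (p j *s vperp u + q j *s u)"
      unfolding B[OF that] p_def q_def using frame_decomp[OF u, of "x j"] by simp
    also have "\<dots> = (A i j * p j) *s vperp u + (A i j * q j + a * (D i j * p j)) *s u"
      by (simp add: matrix_vector_mult_add_rdistrib cscale_mult_vec matrix_vector_right_distrib
          vector_scalar_commute Nu Nv vec_eq_iff algebra_simps)
    finally show ?thesis .
  qed
  then have row: "(\<Sum>j<k. B i j *v x j)
      = matvec k A p i *s vperp u + (matvec k A q i + a * matvec k D p i) *s u" if "i < k" for i
    using that
    by (simp add: matvec_def vec_eq_iff sum.distrib sum_distrib_left sum_distrib_right algebra_simps)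
  have "(\<Sum>i<k. (norm (\<Sum>j<k. B i j *v x j))\<^sup>2)
      = sqnorm k (matvec k A p) + sqnorm k (\<lambda>i. matvec k A q i + a * matvec k D p i)"
    unfolding sqnorm_def sum.distrib[symmetric]
    by (rule sum.cong[OF refl]) (simp only: row norm_frame_comb[OF u] lessThan_iff)
  also have "\<dots> \<le> C" using bound[of p q] pq C by (meson mult_left_le order_trans)
  finally show "sqrt (\<Sum>i<k. (norm (\<Sum>j<k. B i j *v x j))\<^sup>2) \<le> sqrt C"
    by simp
qed

theorem proposition6p4:
  fixes \<theta> :: "(complex \<Rightarrow> complex) \<Rightarrow> complex^2^2"
    and \<alpha> :: "(complex \<Rightarrow> complex) \<Rightarrow> (complex \<Rightarrow> complex)"
  assumes theta_linear: "\<And>c f g. f \<in> disk_algebra \<Longrightarrow> g \<in> disk_algebra \<Longrightarrow>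
                  \<theta> (\<lambda>w. c * f w + g w) = cscale c (\<theta> f) + \<theta> g"
    and theta_mult: "\<And>f g. f \<in> disk_algebra \<Longrightarrow> g \<in> disk_algebra \<Longrightarrow>
                  \<theta> (\<lambda>w. f w * g w) = \<theta> f ** \<theta> g"
    and theta_unital: "\<theta> da_one = mat 1"
    and theta_bounded: "\<exists>C. \<forall>f\<in>disk_algebra. m2_norm (\<theta> f) \<le> C * da_norm f"
    and alpha_maps: "\<And>f. f \<in> disk_algebra \<Longrightarrow> \<alpha> f \<in> disk_algebra"
    and alpha_antilinear: "\<And>c f g. f \<in> disk_algebra \<Longrightarrow> g \<in> disk_algebra \<Longrightarrow>
                  \<alpha> (\<lambda>w. c * f w + g w) = (\<lambda>w. cnj c * \<alpha> f w + \<alpha> g w)"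
    and alpha_unital: "\<alpha> da_one = da_one"
    and theta_alpha_contr: "\<And>f. f \<in> disk_algebra \<Longrightarrow> da_norm f \<le> 1 \<Longrightarrow>
                  m2_norm (cscale (1/2) (\<theta> f + cadj (\<theta> (\<alpha> f)))) \<le> 1"
    and spec: "\<exists>\<mu>. cmod \<mu> < 1 \<and> mat_spectrum (\<theta> da_z) = {\<mu>}"
  shows "\<forall>k. \<forall>F. (\<forall>i<k. \<forall>j<k. F i j \<in> disk_algebra) \<longrightarrow> da_mat_norm k F \<le> 1 \<longrightarrow>
           blk_norm k (\<lambda>i j. \<theta> (F i j)) \<le> 2"
proof (intro allI impI)
  fix k and F :: "nat \<Rightarrow> nat \<Rightarrow> complex \<Rightarrow> complex"
  assume F: "\<forall>i<k. \<forall>j<k. F i j \<in> disk_algebra" and F_norm: "da_mat_norm k F \<le> 1"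
  obtain \<mu> where \<mu>: "cmod \<mu> < 1" and sp: "mat_spectrum (\<theta> da_z) = {\<mu>}" using spec by blast
  define N where "N = \<theta> da_z - mat \<mu>"
  have repr: "\<theta> h = cscale (h \<mu>) (mat 1) + cscale (deriv h \<mu>) N" if "h \<in> disk_algebra" for h
    unfolding N_def by (rule hom_eq_value_plus_deriv[OF theta_linear theta_mult theta_unital
          \<mu> single_eigenvalue_nilpotent(1)[OF sp] that])
  have "N ** N = 0" "N$1$1 + N$2$2 = 0"
    unfolding N_def by (rule single_eigenvalue_nilpotent[OF sp])+
  then obtain u a where u: "norm u = 1" and Nu: "N *v u = 0" and Nv: "N *v vperp u = a *s u"
    by (rule nilpotent_frame)
  have a: "cmod a \<le> 2 * cmod (1 - \<mu> * cnj \<mu>)"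
    by (rule frame_off_diagonal_bound[where \<theta> = \<theta> and \<alpha> = \<alpha>,
          OF repr alpha_maps theta_alpha_contr \<mu> u Nu Nv])
  have "cmod (1 - \<mu> * cnj \<mu>) > 0"
    unfolding norm_one_minus_cnj_self[OF \<mu>] using \<mu> by (simp add: abs_square_less_1)
  then have "1 - \<mu> * cnj \<mu> \<noteq> 0" by auto
  moreover have "contractive k (\<lambda>i j. F i j w)" if "cmod w \<le> 1" for w
    by (rule contractive_if_cmat_norm_le_1) (use cmat_norm_le_da_mat_norm[OF F that] F_norm in linarith)
  ultimately have "sqnorm k (matvec k (\<lambda>i j. F i j \<mu>) p)
      + sqnorm k (\<lambda>i. matvec k (\<lambda>i j. F i j \<mu>) q i + a * matvec k (\<lambda>i j. deriv (F i j) \<mu>) p i)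
      \<le> max 1 (2\<^sup>2) * (sqnorm k p + sqnorm k q)" for p q
    using F \<mu> by (intro sqnorm_rescaled_le[OF matrix_schwarz_pick _ a]) auto
  then have "blk_norm k (\<lambda>i j. \<theta> (F i j)) \<le> sqrt (max 1 (2\<^sup>2))"
    by (intro blk_norm_le_frame[where A = "\<lambda>i j. F i j \<mu>" and D = "\<lambda>i j. deriv (F i j) \<mu>", OF u Nu Nv])
       (simp_all add: repr F)
  then show "blk_norm k (\<lambda>i j. \<theta> (F i j)) \<le> 2" by simp
qed

end
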